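(* Let $p$ be a prime, and let $U,V$ be unitary operators on a finite-dimensional complex Hilbert space with $U^p=V^p=I$. Suppose $UV=\zeta VU$ for some $p$th root of unity $\zeta\ne1$. Then $\|P_UP_V\|_{\mathrm{op}}\le p^{-1/2}$, where $P_U=\frac1p\sum_{a=0}^{p-1}U^a$ and $P_V=\frac1p\sum_{a=0}^{p-1}V^a$.
   Context: $P_U$ is the orthogonal projection onto the fixed space of $U$; $\|\cdot\|_{\mathrm{op}}$ is the operator norm. *)

theory Defs
  imports "HOL-Analysis.Analysis"
begin

text \<open>Operators on the finite-dimensional complex Hilbert space complex^'n
  (standard inner product) are represented by square complex matrices.\<close>

definition ctrans :: "complex^'n^'m \<Rightarrow> complex^'m^'n" where
  "ctrans A = (\<chi> i j. cnj (A $ j $ i))"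

definition unitary_mat :: "complex^'n^'n \<Rightarrow> bool" where
  "unitary_mat U \<longleftrightarrow> U ** ctrans U = mat 1 \<and> ctrans U ** U = mat 1"

primrec mpow :: "complex^'n^'n \<Rightarrow> nat \<Rightarrow> complex^'n^'n" where
  "mpow A 0 = mat 1"
| "mpow A (Suc k) = A ** mpow A k"

definition mscale :: "complex \<Rightarrow> complex^'n^'m \<Rightarrow> complex^'n^'m" where
  "mscale c A = (\<chi> i j. c * A $ i $ j)"

definition avg_proj :: "nat \<Rightarrow> complex^'n^'n \<Rightarrow> complex^'n^'n" where
  "avg_proj p U = mscale (1 / of_nat p) (\<Sum>a<p. mpow U a)"

definition op_norm :: "complex^'n^'m \<Rightarrow> real" where
  "op_norm A = onorm (\<lambda>x. A *v x)"

end

(* If V w = w, then U V = zeta V U makes each U^a w an eigenvector of V with eigenvalue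
   zeta^-a. For prime p these eigenvalues are pairwise distinct for a < p, so the vectors
   U^a w are pairwise orthogonal, all of norm |w|, and |P_U w| = |sum U^a w| / p = |w| / sqrt p.
   Taking w = P_V x, which V fixes because V^p = I, and |P_V x| <= |x| gives the bound. *)
theory Submission
  imports Defs
begin

definition cinner :: "complex^'n \<Rightarrow> complex^'n \<Rightarrow> complex" where
  "cinner x y = (\<Sum>i\<in>UNIV. cnj (x$i) * y$i)"

lemma cinner_self: "cinner x x = of_real ((norm x)\<^sup>2)"
proof -
  have "(norm x)\<^sup>2 = (\<Sum>i\<in>UNIV. (norm (x$i))\<^sup>2)"
    unfolding norm_vec_def L2_set_def by (simp add: sum_nonneg)
  then have "of_real ((norm x)\<^sup>2) = (\<Sum>i\<in>UNIV. complex_of_real ((norm (x$i))\<^sup>2))"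
    by simp
  also have "\<dots> = cinner x x"
    unfolding cinner_def by (simp only: complex_norm_square mult.commute)
  finally show ?thesis ..
qed

lemma cinner_scale_left: "cinner (c *s x) y = cnj c * cinner x y"
  by (simp add: cinner_def sum_distrib_left mult_ac)

lemma cinner_scale_right: "cinner x (c *s y) = c * cinner x y"
  by (simp add: cinner_def sum_distrib_left mult_ac)

lemma cinner_sum_left: "cinner (\<Sum>a\<in>A. f a) y = (\<Sum>a\<in>A. cinner (f a) y)"
  by (induction A rule: infinite_finite_induct) (auto simp: cinner_def sum.distrib distrib_right)

lemma cinner_sum_right: "cinner x (\<Sum>a\<in>A. f a) = (\<Sum>a\<in>A. cinner x (f a))"
  by (induction A rule: infinite_finite_induct) (auto simp: cinner_def sum.distrib distrib_left)

lemma cinner_adjoint: "cinner (A *v x) y = cinner x (ctrans A *v y)"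
proof -
  have "cinner (A *v x) y = (\<Sum>i\<in>UNIV. \<Sum>j\<in>UNIV. cnj (A$i$j) * cnj (x$j) * y$i)"
    unfolding cinner_def matrix_vector_mult_def by (simp add: sum_distrib_right)
  also have "\<dots> = (\<Sum>j\<in>UNIV. \<Sum>i\<in>UNIV. cnj (A$i$j) * cnj (x$j) * y$i)"
    by (rule sum.swap)
  also have "\<dots> = cinner x (ctrans A *v y)"
    unfolding cinner_def matrix_vector_mult_def ctrans_def by (simp add: sum_distrib_left mult_ac)
  finally show ?thesis .
qed

lemma cinner_isometry:
  assumes "ctrans A ** A = mat 1"
  shows "cinner (A *v x) (A *v y) = cinner x y"
  by (simp add: cinner_adjoint matrix_vector_mul_assoc assms)

lemma norm_isometry:
  assumes "ctrans A ** A = mat 1"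
  shows "norm (A *v x) = norm x"
proof -
  have "(norm (A *v x))\<^sup>2 = (norm x)\<^sup>2"
    using cinner_isometry[OF assms, of x x] by (simp only: cinner_self of_real_eq_iff)
  then show ?thesis by (simp add: power2_eq_iff_nonneg)
qed

lemma norm_mpow_isometry:
  assumes "ctrans A ** A = mat 1"
  shows "norm (mpow A k *v x) = norm x"
  by (induction k) (simp_all add: matrix_vector_mul_assoc[symmetric] norm_isometry assms)

lemma norm_vector_scale:
  fixes x :: "'a::real_normed_div_algebra^'n"
  shows "norm (c *s x) = norm c * norm x"
  unfolding norm_vec_def by (simp add: norm_mult L2_set_right_distrib)

lemma norm_sum_orthogonal:
  assumes "finite A" and orth: "\<And>a b. a \<in> A \<Longrightarrow> b \<in> A \<Longrightarrow> a \<noteq> b \<Longrightarrow> cinner (f a) (f b) = 0"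
  shows "(norm (\<Sum>a\<in>A. f a))\<^sup>2 = (\<Sum>a\<in>A. (norm (f a))\<^sup>2)"
proof -
  have "cinner (\<Sum>a\<in>A. f a) (\<Sum>b\<in>A. f b) = (\<Sum>a\<in>A. \<Sum>b\<in>A. cinner (f a) (f b))"
    by (simp only: cinner_sum_left cinner_sum_right) (rule sum.swap)
  also have "\<dots> = (\<Sum>a\<in>A. cinner (f a) (f a))"
  proof (rule sum.cong[OF refl])
    fix a assume "a \<in> A"
    then have "(\<Sum>b\<in>A. cinner (f a) (f b)) = (\<Sum>b\<in>A. if b = a then cinner (f a) (f a) else 0)"
      using orth by (intro sum.cong) auto
    then show "(\<Sum>b\<in>A. cinner (f a) (f b)) = cinner (f a) (f a)"
      using \<open>a \<in> A\<close> \<open>finite A\<close> by (simp add: sum.delta')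
  qed
  finally show ?thesis
    by (simp only: cinner_self of_real_eq_iff flip: of_real_sum)
qed

lemma orthogonal_eigenvectors_isometry:
  assumes "ctrans A ** A = mat 1" "A *v v = c *s v" "A *v w = d *s w" "c \<noteq> d"
  shows "cinner v w = 0"
proof (rule ccontr)
  assume vw: "cinner v w \<noteq> 0"
  have "v \<noteq> 0"
    using vw by (auto simp: cinner_def)
  then have vv: "cinner v v \<noteq> 0"
    by (simp add: cinner_self)
  have "c * cnj c = 1"
    using cinner_isometry[OF assms(1), of v v] vv by (simp add: assms(2) cinner_scale_left cinner_scale_right)
  moreover have "d * cnj c = 1"
    using cinner_isometry[OF assms(1), of v w] vw by (simp add: assms(2,3) cinner_scale_left cinner_scale_right)
  ultimately have "cnj c * d = cnj c * c" "cnj c \<noteq> 0"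
    by (auto simp: mult.commute)
  then have "c = d"
    by simp
  with assms(4) show False ..
qed

lemma power_eq_one_coprime_exponent:
  fixes z :: "'a::monoid_mult"
  assumes "z ^ p = 1" "z ^ d = 1" "coprime d p"
  shows "z = 1"
proof (cases "d = 0")
  case True
  with assms show ?thesis by simp
next
  case False
  then obtain x y where "d * x = p * y + 1"
    using bezout_nat[of d p] assms(3) by auto
  then have "z ^ (d * x) = z"
    by (simp add: power_add power_mult assms(1))
  then show ?thesis
    by (simp add: power_mult assms(2))
qed

lemma inj_on_power_prime_root_of_unity:
  fixes z :: "'a::field"
  assumes "prime p" "z ^ p = 1" "z \<noteq> 1"
  shows "inj_on (\<lambda>a. z ^ a) {..<p}"
proof (rule linorder_inj_onI')
  fix a b assume "a \<in> {..<p}" "b \<in> {..<p}" "a < b"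
  then have "\<not> p dvd (b - a)"
    by (auto dest: dvd_imp_le)
  then have "coprime (b - a) p"
    using assms(1) by (simp add: prime_imp_coprime coprime_commute)
  then have "z ^ (b - a) \<noteq> 1"
    using power_eq_one_coprime_exponent assms(2,3) by blast
  moreover have "z ^ b = z ^ a * z ^ (b - a)"
    unfolding power_add[symmetric] using \<open>a < b\<close> by simp
  moreover have "z \<noteq> 0"
    using assms(2) prime_gt_0_nat[OF assms(1)] by (auto simp: power_0_left)
  ultimately show "z ^ a \<noteq> z ^ b"
    by (metis mult_cancel_left1 power_not_zero)
qed

lemma sum_lessThan_shift_periodic:
  fixes f :: "nat \<Rightarrow> 'a::comm_monoid_add"
  assumes "f p = f 0"
  shows "(\<Sum>a<p. f (Suc a)) = (\<Sum>a<p. f a)"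
proof (cases p)
  case (Suc n)
  have "(\<Sum>a<Suc n. f (Suc a)) = (\<Sum>a<n. f (Suc a)) + f 0"
    using assms Suc by (simp only: sum.lessThan_Suc)
  also have "\<dots> = (\<Sum>a<Suc n. f a)"
    by (simp only: sum.lessThan_Suc_shift add.commute)
  finally show ?thesis
    using Suc by simp
qed simp

lemma mscale_mult_vec: "mscale c A *v x = c *s (A *v x)"
  by (simp add: mscale_def matrix_vector_mult_def vec_eq_iff sum_distrib_left mult.assoc)

lemma mpow_twisted_commute:
  assumes "A ** B = mscale z (B ** A)"
  shows "mpow A k *v (B *v y) = z ^ k *s (B *v (mpow A k *v y))"
proof (induction k arbitrary: y)
  case 0
  then show ?case by simp
next
  case (Suc k)
  have twist: "A *v (B *v v) = z *s (B *v (A *v v))" for v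
    by (simp add: assms mscale_mult_vec matrix_vector_mul_assoc)
  have "mpow A (Suc k) *v (B *v y) = z ^ k *s (A *v (B *v (mpow A k *v y)))"
    by (simp add: Suc vec.scale flip: matrix_vector_mul_assoc)
  also have "A *v (B *v (mpow A k *v y)) = z *s (B *v (mpow A (Suc k) *v y))"
    using twist[of "mpow A k *v y"] by (simp add: matrix_vector_mul_assoc)
  finally show ?case by (simp add: vector_smult_assoc mult.commute)
qed

lemma avg_proj_mult_vec: "avg_proj p A *v x = (1 / of_nat p) *s (\<Sum>a<p. mpow A a *v x)"
proof -
  have "(\<Sum>a<p. mpow A a) *v x = (\<Sum>a<p. mpow A a *v x)"
    by (induction p) (simp_all add: matrix_vector_mult_add_rdistrib)
  then show ?thesis
    by (simp add: avg_proj_def mscale_mult_vec)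
qed

lemma avg_proj_fixed:
  assumes "mpow A p = mat 1"
  shows "A *v (avg_proj p A *v x) = avg_proj p A *v x"
proof -
  have "A *v (\<Sum>a<p. mpow A a *v x) = (\<Sum>a<p. mpow A (Suc a) *v x)"
    by (simp add: vec.sum matrix_vector_mul_assoc)
  also have "\<dots> = (\<Sum>a<p. mpow A a *v x)"
    by (rule sum_lessThan_shift_periodic) (simp add: assms)
  finally show ?thesis
    by (simp add: avg_proj_mult_vec vec.scale)
qed

lemma norm_avg_proj_isometry_le:
  assumes "ctrans A ** A = mat 1"
  shows "norm (avg_proj p A *v x) \<le> norm x"
proof -
  have "norm (avg_proj p A *v x) = norm (\<Sum>a<p. mpow A a *v x) / real p"
    by (simp add: avg_proj_mult_vec norm_vector_scale norm_divide)
  moreover have "norm (\<Sum>a<p. mpow A a *v x) \<le> real p * norm x"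
    using norm_sum[of "\<lambda>a. mpow A a *v x" "{..<p}"] by (simp add: norm_mpow_isometry assms)
  ultimately show ?thesis
    by (cases "p = 0") (simp_all add: pos_divide_le_eq mult.commute)
qed

lemma norm_avg_proj_twisted_fixed:
  fixes U V :: "complex^'n^'n"
  assumes "prime p" "ctrans U ** U = mat 1" "ctrans V ** V = mat 1"
    and "\<zeta> ^ p = 1" "\<zeta> \<noteq> 1" "U ** V = mscale \<zeta> (V ** U)"
    and "V *v w = w"
  shows "norm (avg_proj p U *v w) = norm w / sqrt (real p)"
proof -
  have "p > 0"
    using assms(1) prime_gt_0_nat by blast
  have "\<zeta> \<noteq> 0"
    using assms(4) \<open>p > 0\<close> by (auto simp: power_0_left)
  have eigen: "V *v (mpow U a *v w) = inverse \<zeta> ^ a *s (mpow U a *v w)" for a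
  proof -
    have "mpow U a *v w = \<zeta> ^ a *s (V *v (mpow U a *v w))"
      using mpow_twisted_commute[OF assms(6), of a w] assms(7) by simp
    then have "inverse \<zeta> ^ a *s (mpow U a *v w) = inverse \<zeta> ^ a *s (\<zeta> ^ a *s (V *v (mpow U a *v w)))"
      by simp
    then show ?thesis
      using \<open>\<zeta> \<noteq> 0\<close> by (simp add: vector_smult_assoc power_inverse)
  qed
  have "inj_on (\<lambda>a. inverse \<zeta> ^ a) {..<p}"
    using inj_on_power_prime_root_of_unity[of p "inverse \<zeta>"] assms(1,4,5) by (simp add: power_inverse)
  then have orth: "cinner (mpow U a *v w) (mpow U b *v w) = 0" if "a \<in> {..<p}" "b \<in> {..<p}" "a \<noteq> b" for a b
    using orthogonal_eigenvectors_isometry[OF assms(3) eigen eigen] that by (auto dest: inj_onD)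
  have "(norm (\<Sum>a<p. mpow U a *v w))\<^sup>2 = (\<Sum>a<p. (norm (mpow U a *v w))\<^sup>2)"
    using orth by (intro norm_sum_orthogonal) auto
  also have "\<dots> = (sqrt (real p) * norm w)\<^sup>2"
    by (simp add: norm_mpow_isometry assms(2) power_mult_distrib)
  finally have norm_sum: "norm (\<Sum>a<p. mpow U a *v w) = sqrt (real p) * norm w"
    by (simp add: power2_eq_iff_nonneg)
  have "norm (avg_proj p U *v w) = norm (\<Sum>a<p. mpow U a *v w) / real p"
    by (simp add: avg_proj_mult_vec norm_vector_scale norm_divide)
  also have "\<dots> = norm w / sqrt (real p)"
    using \<open>p > 0\<close> by (simp add: norm_sum field_simps)
  finally show ?thesis .
qed

theorem lemma4p12:
  fixes U V :: "complex^'n^'n" and p :: nat and \<zeta> :: complex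
  assumes "prime p"
    and "unitary_mat U" and "unitary_mat V"
    and "mpow U p = mat 1" and "mpow V p = mat 1"
    and "\<zeta> ^ p = 1" and "\<zeta> \<noteq> 1"
    and "U ** V = mscale \<zeta> (V ** U)"
  shows "op_norm (avg_proj p U ** avg_proj p V) \<le> 1 / sqrt (real p)"
  unfolding op_norm_def
proof (rule onorm_le)
  fix x :: "complex^'n"
  have U: "ctrans U ** U = mat 1" and V: "ctrans V ** V = mat 1"
    using assms(2,3) by (simp_all add: unitary_mat_def)
  let ?w = "avg_proj p V *v x"
  have "V *v ?w = ?w"
    using avg_proj_fixed[OF assms(5)] .
  then have "norm (avg_proj p U *v ?w) = norm ?w / sqrt (real p)"
    using norm_avg_proj_twisted_fixed[OF assms(1) U V assms(6,7,8)] by blast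
  also have "\<dots> \<le> norm x / sqrt (real p)"
    using norm_avg_proj_isometry_le[OF V] by (simp add: divide_right_mono)
  finally show "norm ((avg_proj p U ** avg_proj p V) *v x) \<le> 1 / sqrt (real p) * norm x"
    by (simp add: matrix_vector_mul_assoc)
qed

end
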